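(* Let $C=(C_{i,j})$ be an $m\times n$ evolutionary stable (ES) configuration, where $n$ is divisible by $3$. Suppose that for some row index $i$ with $i+2\le m$, row $i+2$ is the string $101\,101\cdots101$ (i.e.\ $C_{i+2,l}=0$ if $l\equiv 2\pmod 3$ and $C_{i+2,l}=1$ otherwise, for all $1\le l\le n$). Then $C_{i,j}=0$ for every $j$ with $C_{i+2,j}=0$; that is, there is no $j$ with $C_{i+2,j}=0$ and $C_{i,j}=1$.
   Context: An $m\times n$ configuration is a $0$-$1$ matrix $C=(C_{i,j})$, $1\le i\le m$, $1\le j\le n$; $C_{i,j}=1$ means lot $(i,j)$ is occupied by a house. Row $1$ is the northernmost, row $m$ the southernmost; column $1$ westernmost, column $n$ easternmost. A house at $(i,j)$ is blocked from sunlight if the three lots $(i,j-1)$, $(i,j+1)$, $(i+1,j)$ all lie inside the grid and are all occupied (lots outside the grid never obstruct sunlight). $C$ is permissible if no house is blocked, and maximal if it is permissible and setting any single empty lot to $1$ yields a non-permissible configuration. A maximal configuration is resistant to predators if, for every empty lot, putting a house on it results in that new house being blocked; it is resistant to altruists if, for every empty lot, putting a house on it results in some other (already existing) house being blocked. An ES configuration is a maximal configuration resistant to both predators and altruists. *)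

theory Defs
  imports Main
begin

text \<open>An m x n configuration is modelled as a function C :: nat => nat => bool on
  the index box 1..m x 1..n; C i j = True means lot (i,j) is occupied.
  Values outside the box are irrelevant.\<close>

definition in_grid :: "nat \<Rightarrow> nat \<Rightarrow> nat \<Rightarrow> nat \<Rightarrow> bool" where
  "in_grid m n i j \<longleftrightarrow> 1 \<le> i \<and> i \<le> m \<and> 1 \<le> j \<and> j \<le> n"

definition blocked :: "nat \<Rightarrow> nat \<Rightarrow> (nat \<Rightarrow> nat \<Rightarrow> bool) \<Rightarrow> nat \<Rightarrow> nat \<Rightarrow> bool" where
  "blocked m n C i j \<longleftrightarrow> C i j
     \<and> in_grid m n i (j - 1) \<and> j \<ge> 2 \<and> in_grid m n i (j + 1) \<and> in_grid m n (i + 1) j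
     \<and> C i (j - 1) \<and> C i (j + 1) \<and> C (i + 1) j"

definition permissible :: "nat \<Rightarrow> nat \<Rightarrow> (nat \<Rightarrow> nat \<Rightarrow> bool) \<Rightarrow> bool" where
  "permissible m n C \<longleftrightarrow> (\<forall>i j. in_grid m n i j \<longrightarrow> \<not> blocked m n C i j)"

definition add_house :: "(nat \<Rightarrow> nat \<Rightarrow> bool) \<Rightarrow> nat \<Rightarrow> nat \<Rightarrow> (nat \<Rightarrow> nat \<Rightarrow> bool)" where
  "add_house C a b = (\<lambda>i j. if i = a \<and> j = b then True else C i j)"

definition maximal :: "nat \<Rightarrow> nat \<Rightarrow> (nat \<Rightarrow> nat \<Rightarrow> bool) \<Rightarrow> bool" where
  "maximal m n C \<longleftrightarrow> permissible m n C \<and>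
     (\<forall>a b. in_grid m n a b \<and> \<not> C a b \<longrightarrow> \<not> permissible m n (add_house C a b))"

definition resistant_predators :: "nat \<Rightarrow> nat \<Rightarrow> (nat \<Rightarrow> nat \<Rightarrow> bool) \<Rightarrow> bool" where
  "resistant_predators m n C \<longleftrightarrow>
     (\<forall>a b. in_grid m n a b \<and> \<not> C a b \<longrightarrow> blocked m n (add_house C a b) a b)"

definition resistant_altruists :: "nat \<Rightarrow> nat \<Rightarrow> (nat \<Rightarrow> nat \<Rightarrow> bool) \<Rightarrow> bool" where
  "resistant_altruists m n C \<longleftrightarrow>
     (\<forall>a b. in_grid m n a b \<and> \<not> C a b \<longrightarrow>
        (\<exists>i j. in_grid m n i j \<and> C i j \<and> blocked m n (add_house C a b) i j))"

definition ES :: "nat \<Rightarrow> nat \<Rightarrow> (nat \<Rightarrow> nat \<Rightarrow> bool) \<Rightarrow> bool" where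
  "ES m n C \<longleftrightarrow> maximal m n C \<and> resistant_predators m n C \<and> resistant_altruists m n C"

end

theory Submission
  imports Defs
begin

text \<open>
  Reflecting the columns preserves ES configurations, so every fact about a row has a mirror
  image. The key invariant: in every row, a run of empty lots \<open>a, a + 3, \<dots>, a + 3k\<close> that
  starts at a side-harmless gap is closed on the right by a house at \<open>a + 3k + 2\<close>. It holds
  in the first row because that row has no side-harmless gaps, and it passes from a row to the
  next one because a run that is not closed below forces a run in the row above that is not
  closed on the left, contradicting the mirrored invariant there.

  If row \<open>i + 2\<close> is \<open>101 101 \<dots> 101\<close>, then row \<open>i + 1\<close> is occupied at the columns
  \<open>\<equiv> 2 (mod 3)\<close> and exactly one of the columns \<open>3s, 3s + 1\<close> is occupied. An empty lot of
  row \<open>i\<close> at a column \<open>\<equiv> 0\<close> then forces, through the invariant, another such empty lot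
  further to the right, which is absurd. By reflection the columns \<open>\<equiv> 1\<close> of row \<open>i\<close> are
  occupied as well, so a house at a column \<open>\<equiv> 2\<close> of row \<open>i\<close> would be blocked.
\<close>

lemma ES_gap_neighbours:
  assumes "ES m n C" "1 \<le> r" "r \<le> m" "1 \<le> c" "c \<le> n" "\<not> C r c"
  shows "2 \<le> c \<and> c + 1 \<le> n \<and> r + 1 \<le> m \<and> C r (c - 1) \<and> C r (c + 1) \<and> C (r + 1) c"
proof -
  have "blocked m n (add_house C r c) r c"
    using assms by (auto simp: ES_def resistant_predators_def in_grid_def)
  then show ?thesis
    by (auto simp: blocked_def add_house_def in_grid_def split: if_splits)
qed

lemma ES_occupied_above_gap:
  assumes "ES m n C" "1 \<le> r" "r + 1 \<le> m" "1 \<le> c" "c \<le> n" "\<not> C (r + 1) c"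
  shows "C r c"
  using ES_gap_neighbours[OF assms(1,2) _ assms(4,5)] assms(3,6) by fastforce

lemma ES_empty_below_triple:
  assumes "ES m n C" "1 \<le> r" "r + 1 \<le> m" "2 \<le> c" "c + 1 \<le> n"
    and "C r (c - 1)" "C r c" "C r (c + 1)"
  shows "\<not> C (r + 1) c"
proof
  assume "C (r + 1) c"
  with assms have "blocked m n C r c"
    by (auto simp: blocked_def in_grid_def)
  moreover have "permissible m n C"
    using assms(1) by (simp add: ES_def maximal_def)
  ultimately show False
    using assms by (auto simp: permissible_def in_grid_def)
qed

text \<open>An empty lot whose occupation would block neither horizontal neighbour; by altruist
  resistance, occupying it must then block the house above it.\<close>
definition side_harmless_gap :: "nat \<Rightarrow> (nat \<Rightarrow> nat \<Rightarrow> bool) \<Rightarrow> nat \<Rightarrow> nat \<Rightarrow> bool" where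
  "side_harmless_gap n C r c \<longleftrightarrow> \<not> C r c
     \<and> \<not> (3 \<le> c \<and> C r (c - 2) \<and> C (r + 1) (c - 1))
     \<and> \<not> (c + 2 \<le> n \<and> C r (c + 2) \<and> C (r + 1) (c + 1))"

lemma ES_side_harmless_gap_roof:
  assumes ES: "ES m n C" and "r + 1 \<le> m" "1 \<le> c" "c \<le> n"
    and gap: "side_harmless_gap n C (r + 1) c"
  shows "1 \<le> r \<and> C r (c - 1) \<and> C r c \<and> C r (c + 1)"
proof -
  have "\<not> C (r + 1) c"
    using gap by (simp add: side_harmless_gap_def)
  moreover have "in_grid m n (r + 1) c" "resistant_altruists m n C"
    using assms by (auto simp: ES_def in_grid_def)
  ultimately obtain a b where ab: "in_grid m n a b" "C a b" "blocked m n (add_house C (r + 1) c) a b"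
    unfolding resistant_altruists_def by blast
  have "\<not> blocked m n C a b"
    using ES ab(1) by (simp add: ES_def maximal_def permissible_def)
  with ab(2,3) \<open>\<not> C (r + 1) c\<close> have "(a = r + 1 \<and> b = c + 1) \<or> (a = r + 1 \<and> b + 1 = c) \<or> (a = r \<and> b = c)"
    by (auto simp: blocked_def add_house_def split: if_splits)
  then show ?thesis
    using ab(3) gap by (auto simp: blocked_def add_house_def side_harmless_gap_def in_grid_def split: if_splits)
qed

lemma ES_upper_gap_next_to_lower_gap:
  assumes ES: "ES m n C" and r: "1 \<le> r" "r + 1 \<le> m" and x: "1 \<le> x" "x + 2 \<le> n"
    and "\<not> C (r + 1) x" "C r (x + 2)"
  shows "\<not> C r (x + 1)"
proof -
  have "C r x"
    using ES_occupied_above_gap[OF ES r] x assms(6) by simp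
  moreover have "C (r + 1) (x + 1)"
    using ES_gap_neighbours[OF ES _ r(2) x(1) _ assms(6)] x by simp
  ultimately show ?thesis
    using ES_empty_below_triple[OF ES r, of "x + 1"] x assms(7) by auto
qed

lemma ES_side_harmless_gap_above_gap_pair:
  assumes ES: "ES m n C" and r: "1 \<le> r" "r + 1 \<le> m" and x: "1 \<le> x" "x + 2 \<le> n"
    and gaps: "\<not> C (r + 1) x" "\<not> C (r + 1) (x + 2)"
  shows "side_harmless_gap n C r (x + 1)"
proof -
  have "C r (x + 2)"
    using ES_occupied_above_gap[OF ES r _ x(2) gaps(2)] by simp
  then have "\<not> C r (x + 1)"
    using ES_upper_gap_next_to_lower_gap[OF ES r x gaps(1)] by simp
  with gaps show ?thesis
    by (simp add: side_harmless_gap_def)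
qed

text \<open>Reflection of the columns \<open>1..n\<close>; other columns are left unchanged, which makes it
  an involution.\<close>
definition mirror :: "nat \<Rightarrow> (nat \<Rightarrow> nat \<Rightarrow> bool) \<Rightarrow> nat \<Rightarrow> nat \<Rightarrow> bool" where
  "mirror n C = (\<lambda>i j. if 1 \<le> j \<and> j \<le> n then C i (n + 1 - j) else C i j)"

lemma mirror_in_range [simp]: "1 \<le> j \<Longrightarrow> j \<le> n \<Longrightarrow> mirror n C i j = C i (n + 1 - j)"
  by (simp add: mirror_def)

lemma mirror_mirror [simp]: "mirror n (mirror n C) = C"
  by (auto simp: mirror_def fun_eq_iff)

lemma blocked_mirror:
  assumes "1 \<le> j" "j \<le> n"
  shows "blocked m n (mirror n C) i j \<longleftrightarrow> blocked m n C i (n + 1 - j)"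
  using assms by (auto simp: blocked_def in_grid_def Suc_diff_le)

lemma add_house_mirror:
  assumes "1 \<le> b" "b \<le> n"
  shows "add_house (mirror n C) a b = mirror n (add_house C a (n + 1 - b))"
  using assms by (auto simp: add_house_def mirror_def fun_eq_iff)

lemma permissible_mirror_iff: "permissible m n (mirror n C) \<longleftrightarrow> permissible m n C"
proof -
  have *: "permissible m n (mirror n D)" if D: "permissible m n D" for D
    unfolding permissible_def
  proof (intro allI impI)
    fix i j
    assume ij: "in_grid m n i j"
    then have "in_grid m n i (n + 1 - j)"
      by (auto simp: in_grid_def)
    with D have "\<not> blocked m n D i (n + 1 - j)"
      by (simp add: permissible_def)
    with ij show "\<not> blocked m n (mirror n D) i j"
      by (simp add: blocked_mirror in_grid_def)
  qed
  show ?thesis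
    using *[of C] *[of "mirror n C"] by auto
qed

lemma ES_mirror:
  assumes "ES m n C"
  shows "ES m n (mirror n C)"
proof -
  have refl: "in_grid m n a (n + 1 - b)" if "in_grid m n a b" for a b
    using that by (auto simp: in_grid_def)
  have maximal: "maximal m n (mirror n C)"
    using assms refl by (auto simp: ES_def maximal_def permissible_mirror_iff add_house_mirror in_grid_def)
  have predators: "resistant_predators m n (mirror n C)"
    using assms refl by (auto simp: ES_def resistant_predators_def add_house_mirror blocked_mirror in_grid_def)
  have altruists: "resistant_altruists m n (mirror n C)"
    unfolding resistant_altruists_def
  proof (intro allI impI)
    fix a b
    assume ab: "in_grid m n a b \<and> \<not> mirror n C a b"
    then have "in_grid m n a (n + 1 - b) \<and> \<not> C a (n + 1 - b)"
      by (auto simp: in_grid_def)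
    then obtain i j where ij: "in_grid m n i j" "C i j" "blocked m n (add_house C a (n + 1 - b)) i j"
      using assms unfolding ES_def resistant_altruists_def by blast
    then have "in_grid m n i (n + 1 - j) \<and> mirror n C i (n + 1 - j)
        \<and> blocked m n (add_house (mirror n C) a b) i (n + 1 - j)"
      using ab by (auto simp: in_grid_def add_house_mirror blocked_mirror)
    then show "\<exists>i j. in_grid m n i j \<and> mirror n C i j \<and> blocked m n (add_house (mirror n C) a b) i j"
      by blast
  qed
  show ?thesis
    using maximal predators altruists by (simp add: ES_def)
qed

lemma side_harmless_gap_mirror:
  assumes "1 \<le> c" "c \<le> n"
  shows "side_harmless_gap n (mirror n C) r c \<longleftrightarrow> side_harmless_gap n C r (n + 1 - c)"
  using assms by (auto simp: side_harmless_gap_def Suc_diff_le)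

definition gap_run :: "(nat \<Rightarrow> nat \<Rightarrow> bool) \<Rightarrow> nat \<Rightarrow> nat \<Rightarrow> nat \<Rightarrow> bool" where
  "gap_run C r a k \<longleftrightarrow> (\<forall>j \<le> k. \<not> C r (a + 3 * j))"

lemma gap_run_Suc: "gap_run C r a (Suc k) \<longleftrightarrow> gap_run C r a k \<and> \<not> C r (a + 3 * Suc k)"
  unfolding gap_run_def by (metis le_Suc_eq)

lemma gap_run_Suc_left: "gap_run C r a (Suc k) \<longleftrightarrow> \<not> C r a \<and> gap_run C r (a + 3) k"
  unfolding gap_run_def less_Suc_eq_le[symmetric] All_less_Suc2 by (simp add: algebra_simps)

lemma gap_run_mirror:
  assumes "gap_run C r a k" "1 \<le> a" "a + 3 * k \<le> n"
  shows "gap_run (mirror n C) r (n + 1 - (a + 3 * k)) k"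
  unfolding gap_run_def
proof (intro allI impI)
  fix j
  assume "j \<le> k"
  have "\<not> C r (a + 3 * (k - j))"
    using assms(1) by (simp add: gap_run_def)
  moreover have "n + 1 - (n + 1 - (a + 3 * k) + 3 * j) = a + 3 * (k - j)"
      "1 \<le> n + 1 - (a + 3 * k) + 3 * j" "n + 1 - (a + 3 * k) + 3 * j \<le> n"
    using assms(2,3) \<open>j \<le> k\<close> by auto
  ultimately show "\<not> mirror n C r (n + 1 - (a + 3 * k) + 3 * j)"
    by (metis mirror_in_range)
qed

definition gap_chain_closed_right :: "nat \<Rightarrow> (nat \<Rightarrow> nat \<Rightarrow> bool) \<Rightarrow> nat \<Rightarrow> bool" where
  "gap_chain_closed_right n C r \<longleftrightarrow> (\<forall>a k. 1 \<le> a \<longrightarrow> side_harmless_gap n C r a \<longrightarrow> gap_run C r a k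
     \<longrightarrow> a + 3 * k + 2 \<le> n \<longrightarrow> C r (a + 3 * k + 2))"

lemma mirror_gap_chain_closes_left:
  assumes "gap_chain_closed_right n (mirror n C) r"
    and "side_harmless_gap n C r (a + 3 * k)" "gap_run C r a k" "3 \<le> a" "a + 3 * k \<le> n"
  shows "C r (a - 2)"
proof -
  define a' where "a' = n + 1 - (a + 3 * k)"
  have "side_harmless_gap n (mirror n C) r a'"
    using assms(2,4,5) by (simp add: a'_def side_harmless_gap_mirror)
  moreover have "gap_run (mirror n C) r a' k"
    using gap_run_mirror[OF assms(3)] assms(4,5) by (simp add: a'_def)
  moreover have "1 \<le> a'" "a' + 3 * k + 2 \<le> n"
    using assms(4,5) by (auto simp: a'_def)
  ultimately have "mirror n C r (a' + 3 * k + 2)"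
    using assms(1) unfolding gap_chain_closed_right_def by blast
  moreover have "n + 1 - (a' + 3 * k + 2) = a - 2" "1 \<le> a' + 3 * k + 2"
    using assms(4,5) by (auto simp: a'_def)
  ultimately show ?thesis
    using \<open>a' + 3 * k + 2 \<le> n\<close> by simp
qed

lemma gap_chain_closed_right_step:
  assumes ES: "ES m n C" and r: "1 \<le> r" "r + 1 \<le> m"
    and above: "gap_chain_closed_right n (mirror n C) r"
  shows "gap_chain_closed_right n C (r + 1)"
  unfolding gap_chain_closed_right_def
proof (intro allI impI)
  fix a k
  assume a: "1 \<le> a" and gap: "side_harmless_gap n C (r + 1) a" and run: "gap_run C (r + 1) a k"
    and last: "a + 3 * k + 2 \<le> n"
  show "C (r + 1) (a + 3 * k + 2)"
  proof (rule ccontr)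
    assume "\<not> C (r + 1) (a + 3 * k + 2)"
    then have d_harmless: "side_harmless_gap n C r (a + 3 * k + 1)"
      using ES_side_harmless_gap_above_gap_pair[OF ES r, of "a + 3 * k"] run a last
      by (simp add: gap_run_def)
    have roof: "C r (a + 1)"
      using ES_side_harmless_gap_roof[OF ES r(2) a _ gap] last by simp
    have upper_gap: "\<not> C r (a + 3 * s + 1)" if "s \<le> k" "C r (a + 3 * s + 2)" for s
      using ES_upper_gap_next_to_lower_gap[OF ES r, of "a + 3 * s"] run that a last
      by (simp add: gap_run_def)
    have "1 \<le> k"
      using d_harmless roof by (cases k) (auto simp: side_harmless_gap_def)
    txt \<open>Each such run of row \<open>r\<close> ends at the side-harmless gap \<open>a + 3k + 1\<close>, so the mirrored
      invariant closes it on the left by a house, which empties the next lot to the left.\<close>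
    have upper_run: "gap_run C r (a + 3 * s + 1) (k - s)" if "s \<le> k" "1 \<le> s" for s
      using that
    proof (induction s rule: inc_induct)
      case base
      then show ?case
        using d_harmless by (simp add: gap_run_def side_harmless_gap_def)
    next
      case (step s)
      have "(a + 3 * Suc s + 1) + 3 * (k - Suc s) = a + 3 * k + 1"
        using step.hyps by simp
      then have "side_harmless_gap n C r ((a + 3 * Suc s + 1) + 3 * (k - Suc s))"
        using d_harmless by (simp only:)
      from mirror_gap_chain_closes_left[OF above this step.IH] have "C r (a + 3 * s + 2)"
        using step.hyps last by simp
      then have "\<not> C r (a + 3 * s + 1)"
        using upper_gap step.hyps by simp
      moreover have "k - s = Suc (k - Suc s)" "a + 3 * s + 1 + 3 = a + 3 * Suc s + 1"
        using step.hyps by simp_all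
      ultimately show ?case
        using step.IH step.hyps(1) by (simp only: gap_run_Suc_left) simp
    qed
    have "(a + 3 * 1 + 1) + 3 * (k - 1) = a + 3 * k + 1"
      using \<open>1 \<le> k\<close> by simp
    then have "side_harmless_gap n C r ((a + 3 * 1 + 1) + 3 * (k - 1))"
      using d_harmless by (simp only:)
    from mirror_gap_chain_closes_left[OF above this upper_run[of 1]] have "C r (a + 2)"
      using \<open>1 \<le> k\<close> last by simp
    then show False
      using upper_gap[of 0] roof by simp
  qed
qed

lemma ES_gap_chain_closed_right:
  assumes "ES m n C" "1 \<le> r" "r \<le> m"
  shows "gap_chain_closed_right n C r"
  using assms(2,1,3)
proof (induction r arbitrary: C rule: nat_induct_at_least)
  case base
  then show ?case
    using ES_side_harmless_gap_roof[of m n C 0] by (fastforce simp: gap_chain_closed_right_def)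
next
  case (Suc r)
  then show ?case
    using gap_chain_closed_right_step[of m n C r] ES_mirror by simp
qed

locale ES_above_stripe =
  fixes m n i :: nat and C :: "nat \<Rightarrow> nat \<Rightarrow> bool"
  assumes ES: "ES m n C"
    and three_dvd: "3 dvd n"
    and rows: "1 \<le> i" "i + 2 \<le> m"
    and stripe: "\<forall>l. 1 \<le> l \<and> l \<le> n \<longrightarrow> (C (i + 2) l \<longleftrightarrow> l mod 3 \<noteq> 2)"
begin

lemma less_n_if_mod3_nonzero: "x \<le> n \<Longrightarrow> x mod 3 \<noteq> 0 \<Longrightarrow> x < n"
  using three_dvd by (cases "x = n") auto

lemma middle_row_occupied_2mod3:
  assumes "1 \<le> x" "x \<le> n" "x mod 3 = 2"
  shows "C (i + 1) x"
  using ES_occupied_above_gap[OF ES _ _ assms(1,2)] stripe assms rows by auto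

lemma middle_row_pair_exclusive:
  assumes "1 \<le> x" "x + 1 \<le> n" "x mod 3 = 0"
  shows "C (i + 1) x \<longleftrightarrow> \<not> C (i + 1) (x + 1)"
proof
  assume x: "C (i + 1) x"
  obtain y where y: "x = Suc y"
    using assms(1) by (cases x) auto
  with assms(3) have "y mod 3 = 2"
    by (simp add: mod_Suc split: if_splits)
  then have "2 \<le> y"
    by (metis mod_less_eq_dividend)
  then have "2 \<le> x" "C (i + 1) (x - 1)"
    using middle_row_occupied_2mod3[of y] \<open>y mod 3 = 2\<close> y assms(2) by simp_all
  moreover have "C (i + 1 + 1) x"
    using stripe assms by simp
  ultimately show "\<not> C (i + 1) (x + 1)"
    using ES_empty_below_triple[OF ES _ _ _ assms(2) _ x] rows by force
next
  assume "\<not> C (i + 1) (x + 1)"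
  then show "C (i + 1) x"
    using ES_gap_neighbours[OF ES, of "i + 1" "x + 1"] assms rows by simp
qed

lemma upper_row_not_enclosed_2mod3:
  assumes "p mod 3 = 2" "2 \<le> p" "p + 1 \<le> n" "C i (p - 1)" "C i p"
  shows "\<not> C i (p + 1)"
proof
  assume "C i (p + 1)"
  moreover have "C (i + 1) p"
    using middle_row_occupied_2mod3[of p] assms(1-3) by simp
  ultimately show False
    using ES_empty_below_triple[OF ES rows(1) _ assms(2-5)] rows by simp
qed

lemma upper_row_mirror_chain_closed: "gap_chain_closed_right n (mirror n C) i"
  using ES_gap_chain_closed_right[OF ES_mirror[OF ES] rows(1)] rows(2) by simp

text \<open>The last lot \<open>y\<close> of the run is not side-harmless, for the mirrored invariant would put a
  house on \<open>x\<close>; so it has houses at \<open>(i, y + 2)\<close> and \<open>(i + 1, y + 1)\<close>, and then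
  \<open>(i, y + 3)\<close> must be empty, since otherwise \<open>(i, y + 4)\<close> would be.\<close>
lemma upper_gap_run_extends:
  assumes right: "\<And>z. x < z \<Longrightarrow> z \<le> n \<Longrightarrow> z mod 3 = 0 \<Longrightarrow> C i z"
    and x: "x mod 3 = 0" "1 \<le> x" "\<not> C i x"
    and run: "gap_run C i (x + 2) t" "x + 2 + 3 * t \<le> n" "\<not> C (i + 1) (x + 1 + 3 * t)"
  shows "gap_run C i (x + 2) (Suc t) \<and> x + 2 + 3 * Suc t \<le> n \<and> \<not> C (i + 1) (x + 1 + 3 * Suc t)"
proof -
  define y where "y = x + 2 + 3 * t"
  have y_gap: "\<not> C i y"
    using run(1) by (simp add: gap_run_def y_def)
  have y_mod: "(y + k) mod 3 = (2 + k) mod 3" for k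
  proof -
    have "y + k = (x + (2 + k)) + 3 * t"
      by (simp add: y_def)
    then have "(y + k) mod 3 = (x + (2 + k)) mod 3"
      by (simp only: mod_mult_self2)
    also have "\<dots> = (2 + k) mod 3"
      using mod_add_left_eq[of x 3 "2 + k"] x(1) by simp
    finally show ?thesis .
  qed
  have "\<not> side_harmless_gap n C i y"
  proof
    assume "side_harmless_gap n C i y"
    then have "C i x"
      using mirror_gap_chain_closes_left[OF upper_row_mirror_chain_closed _ run(1)] run(2) x(2) by (simp add: y_def)
    with x(3) show False
      by simp
  qed
  then have right_side: "y + 2 \<le> n" "C i (y + 2)" "C (i + 1) (y + 1)"
    using y_gap run(3) by (auto simp: side_harmless_gap_def y_def)
  have "\<not> C (i + 1) (y + 2)"
    using middle_row_pair_exclusive[of "y + 1"] right_side y_mod[of 1] by simp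
  have "y + 3 \<le> n"
    using less_n_if_mod3_nonzero[of "y + 2"] right_side(1) y_mod[of 2] by simp
  have "\<not> C i (y + 3)"
  proof
    assume "C i (y + 3)"
    moreover have "y + 4 \<le> n"
      using less_n_if_mod3_nonzero[of "y + 3"] \<open>y + 3 \<le> n\<close> y_mod[of 3] by simp
    ultimately have "\<not> C i (y + 3 + 1)"
      using upper_row_not_enclosed_2mod3[of "y + 3"] right_side(2) y_mod[of 3] by simp
    moreover have "C i (y + 4)"
      using right[of "y + 4"] \<open>y + 4 \<le> n\<close> y_mod[of 4] by (simp add: y_def)
    ultimately show False
      by (simp add: add.commute)
  qed
  moreover have shifted: "x + 2 + 3 * Suc t = y + 3" "x + 1 + 3 * Suc t = y + 2"
    by (simp_all add: y_def)
  ultimately show ?thesis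
    unfolding gap_run_Suc shifted using run(1) \<open>y + 3 \<le> n\<close> \<open>\<not> C (i + 1) (y + 2)\<close> by blast
qed

lemma upper_occupied_0mod3_if_occupied_right:
  assumes right: "\<And>z. x < z \<Longrightarrow> z \<le> n \<Longrightarrow> z mod 3 = 0 \<Longrightarrow> C i z"
    and x: "x mod 3 = 0" "1 \<le> x" "x \<le> n"
  shows "C i x"
proof (rule ccontr)
  assume gap: "\<not> C i x"
  then have "x + 1 \<le> n" "C i (x + 1)" "C (i + 1) x"
    using ES_gap_neighbours[OF ES rows(1) _ x(2,3)] rows by auto
  then have "\<not> C (i + 1) (x + 1)"
    using middle_row_pair_exclusive[OF x(2) _ x(1)] by simp
  have x_mod: "(x + k) mod 3 = k mod 3" for k
    using mod_add_left_eq[of x 3 k] x(1) by simp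
  have "x + 2 \<le> n"
    using less_n_if_mod3_nonzero[of "x + 1"] \<open>x + 1 \<le> n\<close> x_mod[of 1] by simp
  have "x + 3 \<le> n"
    using less_n_if_mod3_nonzero[of "x + 2"] \<open>x + 2 \<le> n\<close> x_mod[of 2] by simp
  have "\<not> C i (x + 2)"
  proof
    assume "C i (x + 2)"
    then have "\<not> C i (x + 2 + 1)"
      using upper_row_not_enclosed_2mod3[of "x + 2"] \<open>C i (x + 1)\<close> x_mod[of 2] \<open>x + 3 \<le> n\<close> by simp
    moreover have "C i (x + 3)"
      using right[of "x + 3"] \<open>x + 3 \<le> n\<close> x_mod[of 3] by simp
    ultimately show False
      by (simp add: numeral_3_eq_3)
  qed
  have "gap_run C i (x + 2) t \<and> x + 2 + 3 * t \<le> n \<and> \<not> C (i + 1) (x + 1 + 3 * t)" for t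
  proof (induction t)
    case 0
    show ?case
      using \<open>\<not> C i (x + 2)\<close> \<open>x + 2 \<le> n\<close> \<open>\<not> C (i + 1) (x + 1)\<close> by (simp add: gap_run_def)
  next
    case (Suc t)
    with upper_gap_run_extends[OF right x(1,2) gap] show ?case
      by blast
  qed
  then have "x + 2 + 3 * n \<le> n"
    by blast
  then show False
    by simp
qed

lemma upper_row_occupied_0mod3:
  assumes "x mod 3 = 0" "1 \<le> x" "x \<le> n"
  shows "C i x"
  using assms
proof (induction "n - x" arbitrary: x rule: less_induct)
  case less
  show ?case
  proof (rule upper_occupied_0mod3_if_occupied_right[OF _ less.prems])
    fix z
    assume "x < z" "z \<le> n" "z mod 3 = 0"
    then show "C i z"
      using less.hyps[of z] less.prems(2) by (simp add: diff_less_mono2)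
  qed
qed

lemma reflected_residue:
  assumes "u + l = n + 1"
  shows "u mod 3 = 2 \<longleftrightarrow> l mod 3 = 2" "u mod 3 = 0 \<longleftrightarrow> l mod 3 = 1"
proof -
  obtain k where "n = 3 * k"
    using three_dvd by blast
  with assms show "u mod 3 = 2 \<longleftrightarrow> l mod 3 = 2" "u mod 3 = 0 \<longleftrightarrow> l mod 3 = 1"
    by presburger+
qed

lemma mirror_ES_above_stripe: "ES_above_stripe m n i (mirror n C)"
proof
  show "ES m n (mirror n C)"
    using ES_mirror[OF ES] .
  show "3 dvd n" "1 \<le> i" "i + 2 \<le> m"
    using three_dvd rows by simp_all
  show "\<forall>l. 1 \<le> l \<and> l \<le> n \<longrightarrow> (mirror n C (i + 2) l \<longleftrightarrow> l mod 3 \<noteq> 2)"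
  proof (intro allI impI)
    fix l
    assume l: "1 \<le> l \<and> l \<le> n"
    then have "(n + 1 - l) mod 3 = 2 \<longleftrightarrow> l mod 3 = 2"
      using reflected_residue(1)[of "n + 1 - l" l] by simp
    moreover have "1 \<le> n + 1 - l" "n + 1 - l \<le> n"
      using l by auto
    then have "C (i + 2) (n + 1 - l) \<longleftrightarrow> (n + 1 - l) mod 3 \<noteq> 2"
      using stripe by blast
    ultimately show "mirror n C (i + 2) l \<longleftrightarrow> l mod 3 \<noteq> 2"
      using l by simp
  qed
qed

lemma upper_row_occupied_1mod3:
  assumes "x mod 3 = 1" "1 \<le> x" "x \<le> n"
  shows "C i x"
proof -
  interpret mirrored: ES_above_stripe m n i "mirror n C"
    by (rule mirror_ES_above_stripe)
  have "(n + 1 - x) mod 3 = 0"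
    using reflected_residue(2)[of "n + 1 - x" x] assms by simp
  then have "mirror n C i (n + 1 - x)"
    using mirrored.upper_row_occupied_0mod3[of "n + 1 - x"] assms(2,3) by linarith
  then show ?thesis
    using assms(2,3) by simp
qed

lemma upper_row_empty_2mod3:
  assumes "x mod 3 = 2" "1 \<le> x" "x \<le> n"
  shows "\<not> C i x"
proof
  assume "C i x"
  obtain y where y: "x = Suc y"
    using assms(2) by (cases x) auto
  with assms(1) have "y mod 3 = 1"
    by (simp add: mod_Suc split: if_splits)
  then have "1 \<le> y" "C i (x - 1)"
    using upper_row_occupied_1mod3[of y] y assms(3) by auto
  moreover have "x + 1 \<le> n" "(x + 1) mod 3 = 0"
    using less_n_if_mod3_nonzero[of x] assms mod_add_left_eq[of x 3 1] by auto
  ultimately have "\<not> C i (x + 1)"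
    using upper_row_not_enclosed_2mod3[of x] \<open>C i x\<close> assms(1) y by simp
  with \<open>x + 1 \<le> n\<close> \<open>(x + 1) mod 3 = 0\<close> show False
    using upper_row_occupied_0mod3[of "x + 1"] by simp
qed

end

theorem mainTheorem14:
  fixes m n i :: nat and C :: "nat \<Rightarrow> nat \<Rightarrow> bool"
  assumes "ES m n C"
    and "3 dvd n"
    and "1 \<le> i" and "i + 2 \<le> m"
    and "\<forall>l. 1 \<le> l \<and> l \<le> n \<longrightarrow> (C (i + 2) l \<longleftrightarrow> l mod 3 \<noteq> 2)"
  shows "\<not> (\<exists>j. 1 \<le> j \<and> j \<le> n \<and> \<not> C (i + 2) j \<and> C i j)"
proof -
  interpret ES_above_stripe m n i C
    using assms by unfold_locales
  show ?thesis
    using upper_row_empty_2mod3 stripe by blast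
qed

end
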